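(* Let $q$ be a prime power, $2\le k\le n$, and let $\mathcal{C}\subseteq\mathbb{F}_q^n$ be a linear code of dimension $k$ and minimum distance $d$. Then $$\mathbb{E}[\mathcal{C}] = n(H_n-H_{d-1}) - \sum_{r=k}^{n-d}\frac{1}{\binom{n-1}{r}}\sum_{\ell=0}^{n-r}\binom{n-\ell}{r}\sum_{m=0}^{n}(-1)^m\, W_\ell(\mathcal{C}\otimes_{\mathbb{F}_q}\mathbb{F}_{q^m})\,\gamma(q,m,n),$$ where $$\gamma(q,m,n)=\sum_{j=m}^n\Bigg(\prod_{\nu=0}^{j-1}\frac{1}{q^j-q^\nu}\Bigg) q^{\binom{j}{2}+\binom{j-m}{2}}\binom{j}{m}_q,$$ and with the convention that $\mathcal{C}\otimes_{\mathbb{F}_q}\mathbb{F}_{q^0}$ is the zero code.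
   Context: For $m\ge1$, the extension code $\mathcal{C}\otimes_{\mathbb{F}_q}\mathbb{F}_{q^m}\subseteq\mathbb{F}_{q^m}^n$ is the set of all $\mathbb{F}_{q^m}$-linear combinations of codewords of $\mathcal{C}$. For a code $\mathcal{D}$, $W_\ell(\mathcal{D})$ is the number of codewords of Hamming weight $\ell$ (so for the zero code $W_0=1$ and $W_\ell=0$ for $\ell>0$). $\binom{a}{b}_q$ is the Gaussian binomial coefficient; an empty product equals $1$. $H_m=\sum_{i=1}^m 1/i$, $H_0=0$. $\mathbb{E}[\mathcal{C}]$ is $\mathbb{E}[G]$ for any generator matrix $G\in\mathbb{F}_q^{k\times n}$ of $\mathcal{C}$, the expected number of draws when columns of $G$ are drawn independently and uniformly at random from its $n$ columns (with repetition) until the drawn columns span $\mathbb{F}_q^k$. *)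

theory Defs
  imports "HOL-Analysis.Analysis" "HOL-Library.FuncSet"
begin

(* Vectors of F_q^n are 'a ^ 'n with 'a a finite field (q = CARD('a)) and n = CARD('n).
   Linear codes are subspaces w.r.t. the library's vector space structure vec (scalar mult *s). *)

definition hweight :: "'a::zero ^ 'n \<Rightarrow> nat" where
  "hweight x = card {j. x $ j \<noteq> 0}"

definition min_dist :: "('a::zero ^ 'n) set \<Rightarrow> nat" where
  "min_dist C = Min (hweight ` (C - {0}))"

definition generator_matrix :: "('a::field ^ 'n) set \<Rightarrow> 'a ^ 'n ^ 'k \<Rightarrow> bool" where
  "generator_matrix C G \<longleftrightarrow> inj (\<lambda>u. u v* G) \<and> range (\<lambda>u. u v* G) = C"

definition draws_span :: "'a::field ^ 'n ^ 'k \<Rightarrow> nat \<Rightarrow> (nat \<Rightarrow> 'n) \<Rightarrow> bool" where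
  "draws_span G t s \<longleftrightarrow> vec.span ((\<lambda>i. column (s i) G) ` {..<t}) = UNIV"

(* Probability that the stopping time T (number of draws until the drawn columns span F_q^k)
   equals t, the draws being i.i.d. uniform on the n columns. *)
definition stop_prob :: "'a::field ^ 'n ^ 'k \<Rightarrow> nat \<Rightarrow> real" where
  "stop_prob G t =
     real (card {s \<in> {..<t} \<rightarrow>\<^sub>E (UNIV :: 'n set).
                    draws_span G t s \<and> \<not> draws_span G (t - 1) s})
     / real (CARD('n)) ^ t"

definition expected_draws :: "'a::field ^ 'n ^ 'k \<Rightarrow> real" where
  "expected_draws G = (\<Sum>t. real t * stop_prob G t)"

(* Extension code C \<otimes>_{F_q} F_{q^m}: identifying F_{q^m} with F_q^m via an F_q-basis,
   a vector of F_{q^m}^n is an m-tuple (X 0, ..., X (m-1)) of vectors of F_q^n, and it lies in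
   the F_{q^m}-span of C iff every component X i lies in C. *)
definition ext_code :: "('a::zero ^ 'n) set \<Rightarrow> nat \<Rightarrow> (nat \<Rightarrow> 'a ^ 'n) set" where
  "ext_code C m = {X. (\<forall>i<m. X i \<in> C) \<and> (\<forall>i\<ge>m. X i = 0)}"

(* Hamming weight over F_{q^m}: coordinate j is nonzero iff some F_q-component is nonzero. *)
definition ext_weight :: "(nat \<Rightarrow> 'a::zero ^ 'n) \<Rightarrow> nat" where
  "ext_weight X = card {j. \<exists>i. X i $ j \<noteq> 0}"

definition W_ext :: "('a::zero ^ 'n) set \<Rightarrow> nat \<Rightarrow> nat \<Rightarrow> nat" where
  "W_ext C m l = card {X \<in> ext_code C m. ext_weight X = l}"

definition gauss_binom :: "real \<Rightarrow> nat \<Rightarrow> nat \<Rightarrow> real" where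
  "gauss_binom q a b = (if b \<le> a then (\<Prod>i<b. (q ^ (a - i) - 1) / (q ^ (i + 1) - 1)) else 0)"

definition gamma_coeff :: "real \<Rightarrow> nat \<Rightarrow> nat \<Rightarrow> real" where
  "gamma_coeff q m n = (\<Sum>j=m..n. (\<Prod>\<nu><j. 1 / (q ^ j - q ^ \<nu>))
        * q ^ ((j choose 2) + ((j - m) choose 2)) * gauss_binom q j m)"

end

(*
  The draws stop at the first time T at which the drawn columns span F_q^k, so P(T > t) is the
  probability that the set of the first t drawn columns is a non-spanning set R of columns.
  Counting draw sequences with image exactly R by inclusion-exclusion and summing the series
  over t gives E[T] = sum over non-spanning R of 1 / binom(n-1, |R|), by the identity
  sum_i (-1)^(s-i) binom(s,i) n / (n-i) = 1 / binom(n-1, s).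

  A set S of columns fails to span iff some nonzero codeword vanishes on S, so every S with
  |S| > n - d spans and no S with |S| < k does. Whether the subcode C_S of codewords vanishing
  on S is zero is detected by the q-binomial theorem: sum_m (-1)^m gamma(q,m,n) x^m is 1 at
  x = 1 and 0 at x = q, ..., q^n, and |C_S|^m is the number of codewords of the extension code
  C (x) F_(q^m) vanishing on S. Summing over the S with |S| = r counts each such codeword of
  weight l exactly binom(n-l, r) times.
*)
theory Submission
  imports Defs
begin

section \<open>Gaussian binomial coefficients\<close>

lemma choose_two_Suc: "Suc n choose 2 = (n choose 2) + n"
  by (simp add: numeral_2_eq_2)

lemma gauss_binom_eq_quotient:
  "gauss_binom q a b = (\<Prod>i<b. q ^ (a - i) - 1) / (\<Prod>i<b. q ^ (i + 1) - 1)"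
proof (cases "b \<le> a")
  case True
  then show ?thesis by (simp add: gauss_binom_def prod_dividef)
next
  case False
  then have "(\<Prod>i<b. q ^ (a - i) - 1) = 0"
    by (auto intro!: bexI[of _ a])
  with False show ?thesis by (simp add: gauss_binom_def)
qed

lemma gauss_binom_0_right [simp]: "gauss_binom q a 0 = 1"
  by (simp add: gauss_binom_def)

lemma gauss_binom_eq_0 [simp]: "a < b \<Longrightarrow> gauss_binom q a b = 0"
  by (simp add: gauss_binom_def)

lemma prod_q_power_minus_1_pos: "(q::real) > 1 \<Longrightarrow> (\<Prod>i<b. q ^ (i + 1) - 1) > 0"
  by (intro prod_pos) (simp del: power_Suc)

lemma gauss_binom_Suc_Suc:
  assumes q: "(q::real) > 1"
  shows "gauss_binom q (Suc j) (Suc m) = gauss_binom q j m + q ^ Suc m * gauss_binom q j (Suc m)"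
proof -
  define A where "A = (\<Prod>i<m. q ^ (j - i) - 1)"
  define D where "D = (\<Prod>i<m. q ^ (i + 1) - 1)"
  have D: "D \<noteq> 0"
    unfolding D_def using prod_q_power_minus_1_pos[OF q] by (metis less_irrefl)
  have qm: "q ^ Suc m - 1 \<noteq> 0"
    using q one_less_power[of q "Suc m"] by simp
  have num_Suc: "(\<Prod>i<Suc m. q ^ (Suc j - i) - 1) = (q ^ Suc j - 1) * A"
    unfolding A_def by (subst prod.lessThan_Suc_shift) simp
  have num: "(\<Prod>i<Suc m. q ^ (j - i) - 1) = A * (q ^ (j - m) - 1)"
    unfolding A_def by simp
  have den: "(\<Prod>i<Suc m. q ^ (i + 1) - 1) = D * (q ^ Suc m - 1)"
    unfolding D_def by simp
  show ?thesis
  proof (cases "m \<le> j")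
    case True
    then have "q ^ j = q ^ m * q ^ (j - m)"
      by (simp flip: power_add)
    then show ?thesis
      unfolding gauss_binom_eq_quotient num_Suc num den A_def[symmetric] D_def[symmetric]
      using D qm by (simp add: field_simps)
  next
    case False
    then have "A = 0"
      unfolding A_def by (auto intro!: bexI[of _ j])
    then show ?thesis
      unfolding gauss_binom_eq_quotient num_Suc num den A_def[symmetric] D_def[symmetric] by simp
  qed
qed

lemma gauss_binom_self: "(q::real) > 1 \<Longrightarrow> gauss_binom q j j = 1"
  by (induction j) (simp_all add: gauss_binom_Suc_Suc)

definition qfall_coeff :: "real \<Rightarrow> nat \<Rightarrow> nat \<Rightarrow> real" where
  "qfall_coeff q j m = (-1) ^ (j - m) * q ^ ((j - m) choose 2) * gauss_binom q j m"

lemma qfall_coeff_eq_0: "j < m \<Longrightarrow> qfall_coeff q j m = 0"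
  by (simp add: qfall_coeff_def)

lemma qfall_coeff_Suc_0: "qfall_coeff q (Suc j) 0 = - (q ^ j * qfall_coeff q j 0)"
  by (simp add: qfall_coeff_def choose_two_Suc power_add)

lemma qfall_coeff_Suc_Suc:
  assumes q: "(q::real) > 1" and "m \<le> j"
  shows "qfall_coeff q (Suc j) (Suc m) = qfall_coeff q j m - q ^ j * qfall_coeff q j (Suc m)"
proof (cases "m = j")
  case True
  then show ?thesis using q by (simp add: qfall_coeff_def gauss_binom_self)
next
  case False
  with assms(2) obtain b where j: "j = m + Suc b"
    by (metis add_Suc_right le_eq_less_or_eq less_imp_Suc_add)
  then have diffs: "Suc j - Suc m = Suc b" "j - m = Suc b" "j - Suc m = b" by auto
  show ?thesis
    unfolding qfall_coeff_def gauss_binom_Suc_Suc[OF q] diffs choose_two_Suc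
    by (simp add: j power_add algebra_simps)
qed

lemma prod_diff_q_powers_expand:
  assumes q: "(q::real) > 1"
  shows "(\<Prod>\<nu><j. x - q ^ \<nu>) = (\<Sum>m\<le>j. qfall_coeff q j m * x ^ m)"
proof (induction j)
  case 0
  then show ?case by (simp add: qfall_coeff_def binomial_eq_0)
next
  case (Suc j)
  let ?c = "qfall_coeff q"
  have "(\<Sum>m\<le>j. ?c j m * x ^ m) = (\<Sum>m\<le>Suc j. ?c j m * x ^ m)"
    by (simp add: qfall_coeff_eq_0)
  also have "\<dots> = ?c j 0 + (\<Sum>m\<le>j. ?c j (Suc m) * x ^ Suc m)"
    by (subst sum.atMost_Suc_shift) simp
  finally have shift: "(\<Sum>m\<le>j. ?c j m * x ^ m) = ?c j 0 + (\<Sum>m\<le>j. ?c j (Suc m) * x ^ Suc m)" .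
  have "(\<Prod>\<nu><Suc j. x - q ^ \<nu>) = (\<Sum>m\<le>j. ?c j m * x ^ Suc m) - q ^ j * (\<Sum>m\<le>j. ?c j m * x ^ m)"
    by (simp add: Suc sum_distrib_left algebra_simps sum_subtractf)
  also have "\<dots> = ?c (Suc j) 0 + (\<Sum>m\<le>j. ?c (Suc j) (Suc m) * x ^ Suc m)"
    unfolding shift
    by (simp add: qfall_coeff_Suc_0 qfall_coeff_Suc_Suc[OF q] sum_distrib_left algebra_simps sum_subtractf)
  also have "\<dots> = (\<Sum>m\<le>Suc j. ?c (Suc j) m * x ^ m)"
    by (subst sum.atMost_Suc_shift) simp
  finally show ?case .
qed

lemma prod_q_power_diff_factor:
  fixes q :: "'a::comm_ring_1"
  assumes "j \<le> u"
  shows "(\<Prod>\<nu><j. q ^ u - q ^ \<nu>) = (\<Prod>\<nu><j. q ^ \<nu>) * (\<Prod>\<nu><j. q ^ (u - \<nu>) - 1)"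
proof -
  have "q ^ u - q ^ \<nu> = q ^ \<nu> * (q ^ (u - \<nu>) - 1)" if "\<nu> < j" for \<nu>
    using that assms by (simp add: right_diff_distrib flip: power_add)
  then show ?thesis
    by (simp add: prod.distrib)
qed

lemma gauss_binom_eq_prod_ratio:
  assumes q: "(q::real) > 1"
  shows "(\<Prod>\<nu><j. 1 / (q ^ j - q ^ \<nu>)) * (\<Prod>\<nu><j. q ^ u - q ^ \<nu>) = gauss_binom q u j"
proof (cases "j \<le> u")
  case True
  have "(\<Prod>\<nu><j. q ^ (j - \<nu>) - 1) = (\<Prod>i<j. q ^ (j - Suc i + 1) - 1)"
    by (intro prod.cong refl) (simp add: Suc_diff_Suc del: power_Suc)
  also have "\<dots> = (\<Prod>i<j. q ^ (i + 1) - 1)"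
    by (rule prod.nat_diff_reindex)
  finally have den: "(\<Prod>\<nu><j. q ^ j - q ^ \<nu>) = (\<Prod>\<nu><j. q ^ \<nu>) * (\<Prod>i<j. q ^ (i + 1) - 1)"
    by (simp add: prod_q_power_diff_factor)
  have "(\<Prod>\<nu><j. q ^ \<nu>) > 0" "(\<Prod>i<j. q ^ (i + 1) - 1) > 0"
    using q prod_q_power_minus_1_pos[OF q] by (auto intro: prod_pos)
  then show ?thesis
    unfolding gauss_binom_eq_quotient prod_q_power_diff_factor[OF True]
    using q by (simp add: prod_dividef den)
next
  case False
  then have "(\<Prod>\<nu><j. q ^ u - q ^ \<nu>) = 0"
    by (auto intro!: bexI[of _ u])
  with False show ?thesis by simp
qed

lemma gauss_binom_alternating_sum:
  assumes q: "(q::real) > 1"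
  shows "(\<Sum>j\<le>u. (-1) ^ j * q ^ (j choose 2) * gauss_binom q u j) = (if u = 0 then 1 else 0)"
proof (cases u)
  case 0
  then show ?thesis by (simp add: binomial_eq_0)
next
  case (Suc v)
  define a where "a m = (-1) ^ m * q ^ (Suc m choose 2) * gauss_binom q v m" for m
  have telescope: "(-1) ^ Suc m * q ^ (Suc m choose 2) * gauss_binom q (Suc v) (Suc m) = a (Suc m) - a m"
    for m
    unfolding a_def gauss_binom_Suc_Suc[OF q] choose_two_Suc[of "Suc m"]
    by (simp add: power_add algebra_simps)
  have "(\<Sum>j\<le>Suc v. (-1) ^ j * q ^ (j choose 2) * gauss_binom q (Suc v) j)
      = 1 + (\<Sum>m<Suc v. (-1) ^ Suc m * q ^ (Suc m choose 2) * gauss_binom q (Suc v) (Suc m))"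
    by (subst sum.atMost_Suc_shift) (simp add: binomial_eq_0 lessThan_Suc_atMost)
  also have "\<dots> = 1 + a (Suc v) - a 0"
    by (simp only: telescope sum_lessThan_telescope)
  also have "\<dots> = 0"
    by (simp add: a_def numeral_2_eq_2)
  finally show ?thesis
    using Suc by simp
qed

text \<open>Summing over \<open>m\<close> first, the q-binomial theorem and
  \<open>(\<Prod>\<nu><j. (q^u - q^\<nu>) / (q^j - q^\<nu>)) = [u, j]_q\<close> turn the left-hand side into
  the alternating sum of \<open>gauss_binom_alternating_sum\<close>.\<close>

lemma gamma_coeff_alternating_sum:
  assumes q: "(q::real) > 1" and u: "u \<le> n"
  shows "(\<Sum>m=0..n. (-1) ^ m * gamma_coeff q m n * (q ^ u) ^ m) = (if u = 0 then 1 else 0)"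
proof -
  define x where "x = q ^ u"
  define c where "c j = (\<Prod>\<nu><j. 1 / (q ^ j - q ^ \<nu>))" for j
  define F where "F m j = (-1) ^ m * c j * q ^ ((j choose 2) + ((j - m) choose 2)) * gauss_binom q j m * x ^ m"
    for m j
  have "(\<Sum>m=0..n. (-1) ^ m * gamma_coeff q m n * x ^ m) = (\<Sum>m\<in>{0..n}. \<Sum>j | j \<in> {0..n} \<and> m \<le> j. F m j)"
    unfolding gamma_coeff_def F_def c_def
    by (auto simp: sum_distrib_left sum_distrib_right mult_ac intro!: sum.cong)
  also have "\<dots> = (\<Sum>j\<in>{0..n}. \<Sum>m | m \<in> {0..n} \<and> m \<le> j. F m j)"
    by (rule sum.swap_restrict) auto
  also have "\<dots> = (\<Sum>j\<in>{0..n}. c j * q ^ (j choose 2) * (-1) ^ j *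
      (\<Sum>m\<le>j. qfall_coeff q j m * x ^ m))"
  proof (intro sum.cong refl)
    fix j assume j: "j \<in> {0..n}"
    have range: "{m. m \<in> {0..n} \<and> m \<le> j} = {..j}"
      using j by auto
    have "F m j = c j * q ^ (j choose 2) * (-1) ^ j *
        (qfall_coeff q j m * x ^ m)" if "m \<le> j" for m
    proof -
      have "(-1::real) ^ m = (-1) ^ j * (-1) ^ (j - m)"
        using that by (simp add: minus_one_power_iff)
      then show ?thesis
        unfolding F_def qfall_coeff_def power_add by (simp only: mult_ac)
    qed
    then show "(\<Sum>m | m \<in> {0..n} \<and> m \<le> j. F m j) = c j * q ^ (j choose 2) * (-1) ^ j *
        (\<Sum>m\<le>j. qfall_coeff q j m * x ^ m)"
      unfolding range sum_distrib_left by (intro sum.cong) auto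
  qed
  also have "\<dots> = (\<Sum>j\<in>{0..n}. (-1) ^ j * q ^ (j choose 2) * gauss_binom q u j)"
    unfolding prod_diff_q_powers_expand[OF q, symmetric] x_def c_def
    by (simp add: gauss_binom_eq_prod_ratio[OF q, symmetric] mult_ac)
  also have "\<dots> = (\<Sum>j\<le>u. (-1) ^ j * q ^ (j choose 2) * gauss_binom q u j)"
    using u by (intro sum.mono_neutral_right) auto
  finally show ?thesis
    unfolding x_def gauss_binom_alternating_sum[OF q] .
qed

section \<open>An alternating binomial sum\<close>

lemma sum_alternating_binomial_div_Suc:
  fixes y :: "'a::field"
  shows "(\<Sum>i\<le>Suc s. of_nat (Suc s choose i) * (-1) ^ (Suc s - i) / (y - of_nat i))
       = (\<Sum>i\<le>s. of_nat (s choose i) * (-1) ^ (s - i) / (y - 1 - of_nat i))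
       - (\<Sum>i\<le>s. of_nat (s choose i) * (-1) ^ (s - i) / (y - of_nat i))"
proof -
  define g where "g i = of_nat (s choose i) * (-1) ^ (Suc s - i) / (y - of_nat i)" for i
  have "(\<Sum>i\<le>Suc s. g i) = (\<Sum>i\<le>s. g i)"
    by (simp add: g_def binomial_eq_0)
  also have "\<dots> = - (\<Sum>i\<le>s. of_nat (s choose i) * (-1) ^ (s - i) / (y - of_nat i))"
    by (simp add: g_def Suc_diff_le sum_negf)
  finally have g_sum: "(\<Sum>i\<le>Suc s. g i) = \<dots>" .
  have "(\<Sum>i\<le>Suc s. of_nat (Suc s choose i) * (-1) ^ (Suc s - i) / (y - of_nat i))
      = (-1) ^ Suc s / y + (\<Sum>j\<le>s. of_nat (Suc s choose Suc j) * (-1) ^ (s - j) / (y - of_nat (Suc j)))"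
    by (subst sum.atMost_Suc_shift) simp
  also have "\<dots> = g 0 + (\<Sum>j\<le>s. of_nat (s choose j) * (-1) ^ (s - j) / (y - 1 - of_nat j))
                 + (\<Sum>j\<le>s. g (Suc j))"
    by (simp add: g_def sum.distrib add_divide_distrib algebra_simps)
  also have "(\<Sum>j\<le>s. g (Suc j)) = (\<Sum>i\<le>Suc s. g i) - g 0"
    by (subst sum.atMost_Suc_shift) simp
  finally show ?thesis
    unfolding g_sum by simp
qed

lemma sum_alternating_binomial_div:
  fixes y :: "'a::field_char_0"
  assumes "\<forall>i\<le>s. y \<noteq> of_nat i"
  shows "(\<Sum>i\<le>s. of_nat (s choose i) * (-1) ^ (s - i) / (y - of_nat i)) = fact s / (\<Prod>i\<le>s. y - of_nat i)"
  using assms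
proof (induction s arbitrary: y)
  case 0
  then show ?case by simp
next
  case (Suc s)
  define P where "P = (\<Prod>i\<le>s. y - 1 - of_nat i)"
  define Q where "Q = (\<Prod>i\<le>s. y - of_nat i)"
  have "y - 1 \<noteq> of_nat i" if "i \<le> s" for i
    using Suc.prems that by (metis Suc_le_mono diff_eq_eq of_nat_Suc add.commute)
  then have IH: "(\<Sum>i\<le>s. of_nat (s choose i) * (-1) ^ (s - i) / (y - 1 - of_nat i)) = fact s / P"
    unfolding P_def by (intro Suc.IH) auto
  have P: "P \<noteq> 0" and Q: "Q \<noteq> 0" and y: "y \<noteq> 0" and ys: "y - of_nat (Suc s) \<noteq> 0"
    using Suc.prems unfolding P_def Q_def
    by (auto simp: diff_eq_eq add.commute simp flip: of_nat_Suc)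
  have yP: "(\<Prod>i\<le>Suc s. y - of_nat i) = y * P"
    unfolding P_def by (subst prod.atMost_Suc_shift) (simp add: algebra_simps)
  have Qy: "(\<Prod>i\<le>Suc s. y - of_nat i) = Q * (y - of_nat (Suc s))"
    unfolding Q_def by simp
  have key: "y * (Q - P) = of_nat (Suc s) * Q"
    using yP Qy by (simp add: algebra_simps)
  have "fact s / P - fact s / Q = fact s * (y * (Q - P)) / (y * P * Q)"
    using P Q y by (simp add: field_simps)
  also have "\<dots> = fact (Suc s) / (y * P)"
    unfolding key using P Q y by (simp add: field_simps)
  finally show ?case
    unfolding sum_alternating_binomial_div_Suc IH
    using Suc.IH[of y] Suc.prems yP unfolding Q_def by simp
qed

lemma sum_alternating_binomial_recip:
  assumes "s < n"
  shows "(\<Sum>i\<le>s. real (s choose i) * (-1) ^ (s - i) * (real n / (real n - real i)))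
       = 1 / real ((n - 1) choose s)"
proof -
  have "(\<Prod>i\<le>s. real n - real i) = real (n choose Suc s) * fact (Suc s)"
    by (simp only: binomial_gbinomial gbinomial_mult_fact' atLeast0LessThan lessThan_Suc_atMost)
  also have "\<dots> = real (Suc s * (n choose Suc s)) * fact s"
    by (simp add: algebra_simps)
  also have "\<dots> = real n * real ((n - 1) choose s) * fact s"
    by (simp only: binomial_absorption of_nat_mult)
  finally have prod: "(\<Prod>i\<le>s. real n - real i) = real n * real ((n - 1) choose s) * fact s" .
  have "(\<Sum>i\<le>s. real (s choose i) * (-1) ^ (s - i) * (real n / (real n - real i)))
      = real n * (\<Sum>i\<le>s. real (s choose i) * (-1) ^ (s - i) / (real n - real i))"
    by (simp add: sum_distrib_left mult_ac)
  also have "\<dots> = real n * fact s / (\<Prod>i\<le>s. real n - real i)"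
    using assms by (subst sum_alternating_binomial_div) auto
  also have "\<dots> = 1 / real ((n - 1) choose s)"
    using assms unfolding prod by simp
  finally show ?thesis .
qed

section \<open>The expected number of draws\<close>

definition columns_span :: "'a::field ^ 'n ^ 'k \<Rightarrow> 'n set \<Rightarrow> bool" where
  "columns_span G S \<longleftrightarrow> vec.span ((\<lambda>j. column j G) ` S) = UNIV"

lemma draws_span_iff_columns_span: "draws_span G t s \<longleftrightarrow> columns_span G (s ` {..<t})"
  unfolding draws_span_def columns_span_def by (simp add: image_image)

lemma columns_span_mono: "columns_span G S \<Longrightarrow> S \<subseteq> T \<Longrightarrow> columns_span G T"
  unfolding columns_span_def by (metis image_mono top.extremum_uniqueI vec.span_mono)

lemma card_PiE_image_subset:
  fixes R :: "'n::finite set"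
  assumes "finite J" "I \<subseteq> J"
  shows "card {s \<in> J \<rightarrow>\<^sub>E (UNIV::'n set). s ` I \<subseteq> R} = card R ^ card I * CARD('n) ^ (card J - card I)"
proof -
  have "{s \<in> J \<rightarrow>\<^sub>E (UNIV::'n set). s ` I \<subseteq> R} = (\<Pi>\<^sub>E j\<in>J. if j \<in> I then R else UNIV)"
    using assms(2) by (auto simp: PiE_def Pi_def)
  then have "card {s \<in> J \<rightarrow>\<^sub>E (UNIV::'n set). s ` I \<subseteq> R} = (\<Prod>j\<in>J. if j \<in> I then card R else CARD('n))"
    using assms(1) by (simp add: card_PiE if_distrib)
  also have "\<dots> = card R ^ card I * CARD('n) ^ (card J - card I)"
    using assms by (simp add: prod.If_cases Int_absorb1 card_Diff_subset finite_subset Diff_eq[symmetric])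
  finally show ?thesis .
qed

lemma card_PiE_image_in_eq_sum:
  fixes \<R> :: "'n::finite set set"
  assumes "finite J"
  shows "real (card {s \<in> J \<rightarrow>\<^sub>E (UNIV::'n set). s ` I \<in> \<R>})
       = (\<Sum>R\<in>\<R>. real (card {s \<in> J \<rightarrow>\<^sub>E (UNIV::'n set). s ` I = R}))"
proof -
  have "real (card {s \<in> J \<rightarrow>\<^sub>E (UNIV::'n set). s ` I \<in> \<R>})
      = (\<Sum>R\<in>\<R>. \<Sum>s | s \<in> {s \<in> J \<rightarrow>\<^sub>E UNIV. s ` I \<in> \<R>} \<and> s ` I = R. 1)"
    by (subst sum.group) (auto simp: assms finite_PiE)
  also have "\<dots> = (\<Sum>R\<in>\<R>. real (card {s \<in> J \<rightarrow>\<^sub>E (UNIV::'n set). s ` I = R}))"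
    by (intro sum.cong refl) (auto intro!: arg_cong[where f = card])
  finally show ?thesis .
qed

lemma card_PiE_image_eq:
  fixes R :: "'n::finite set"
  assumes "finite J" "I \<subseteq> J"
  shows "real (card {s \<in> J \<rightarrow>\<^sub>E (UNIV::'n set). s ` I = R})
       = real CARD('n) ^ (card J - card I) *
         (\<Sum>U\<in>Pow R. (-1) ^ (card R - card U) * real (card U) ^ card I)"
proof -
  define f where "f R = real (card {s \<in> J \<rightarrow>\<^sub>E (UNIV::'n set). s ` I = R})" for R
  define g where "g U = real CARD('n) ^ (card J - card I) * real (card U) ^ card I" for U :: "'n set"
  have "g S = sum f (Pow S)" for S
  proof -
    have "{s \<in> J \<rightarrow>\<^sub>E (UNIV::'n set). s ` I \<in> Pow S} = {s \<in> J \<rightarrow>\<^sub>E UNIV. s ` I \<subseteq> S}"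
      by auto
    then show ?thesis
      using card_PiE_image_in_eq_sum[OF assms(1), of I "Pow S"] card_PiE_image_subset[OF assms, of S]
      unfolding f_def g_def by (simp add: mult.commute)
  qed
  then have "f R = (\<Sum>U\<in>Pow R. (-1) ^ (card R - card U) * g U)"
    by (intro inclusion_exclusion_mobius) auto
  then show ?thesis
    unfolding f_def g_def by (simp add: sum_distrib_left mult_ac)
qed

lemma card_PiE_not_spanning:
  fixes G :: "'a::field ^ 'n ^ 'k"
  assumes "finite J" "I \<subseteq> J"
  shows "real (card {s \<in> J \<rightarrow>\<^sub>E (UNIV::'n set). \<not> columns_span G (s ` I)})
       = real CARD('n) ^ (card J - card I) *
         (\<Sum>R | \<not> columns_span G R. \<Sum>U\<in>Pow R. (-1) ^ (card R - card U) * real (card U) ^ card I)"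
  using card_PiE_image_in_eq_sum[OF assms(1), of I "{R. \<not> columns_span G R}"]
  by (simp add: card_PiE_image_eq[OF assms] sum_distrib_left)

lemma stop_prob_eq_sum_not_spanning:
  fixes G :: "'a::field ^ 'n ^ 'k"
  assumes t: "t \<ge> 1"
  shows "stop_prob G t = (\<Sum>R | \<not> columns_span G R. \<Sum>U\<in>Pow R. (-1) ^ (card R - card U) *
           ((real (card U) / CARD('n)) ^ (t - 1) - (real (card U) / CARD('n)) ^ t))"
proof -
  let ?P = "{..<t} \<rightarrow>\<^sub>E (UNIV::'n set)"
  define \<sigma> where "\<sigma> i = (\<Sum>R | \<not> columns_span G R. \<Sum>U\<in>Pow R. (-1) ^ (card R - card U) * real (card U) ^ i)"
    for i
  define A where "A = {s \<in> ?P. \<not> columns_span G (s ` {..<t - 1})}"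
  define B where "B = {s \<in> ?P. \<not> columns_span G (s ` {..<t})}"
  have "{..<t - 1} \<subseteq> {..<t}"
    by auto
  then have "B \<subseteq> A"
    unfolding A_def B_def using columns_span_mono[OF _ image_mono] by blast
  moreover have "{s \<in> ?P. draws_span G t s \<and> \<not> draws_span G (t - 1) s} = A - B"
    unfolding A_def B_def draws_span_iff_columns_span by auto
  moreover have "finite A"
    unfolding A_def by (simp add: finite_PiE)
  ultimately have "stop_prob G t = (real (card A) - real (card B)) / real CARD('n) ^ t"
    unfolding stop_prob_def by (simp add: card_Diff_subset finite_subset card_mono)
  also have "real (card A) = real CARD('n) * \<sigma> (t - 1)"
    unfolding A_def \<sigma>_def using t by (subst card_PiE_not_spanning) auto
  also have "real (card B) = \<sigma> t"
    unfolding B_def \<sigma>_def by (subst card_PiE_not_spanning) auto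
  also have "(real CARD('n) * \<sigma> (t - 1) - \<sigma> t) / real CARD('n) ^ t
      = \<sigma> (t - 1) / real CARD('n) ^ (t - 1) - \<sigma> t / real CARD('n) ^ t"
    using t by (cases t) (simp_all add: field_simps)
  finally show ?thesis
    unfolding \<sigma>_def by (simp add: power_divide right_diff_distrib sum_subtractf sum_divide_distrib)
qed

lemma sums_of_nat_times_diff_powers:
  fixes x :: real
  assumes "\<bar>x\<bar> < 1"
  shows "(\<lambda>t. real t * (x ^ (t - 1) - x ^ t)) sums (1 / (1 - x))"
proof -
  have "(\<lambda>t. (1 - x) * (of_nat (Suc t) * x ^ t)) sums ((1 - x) * (1 / (1 - x)\<^sup>2))"
    by (intro sums_mult geometric_deriv_sums) (use assms in simp)
  moreover have "(1 - x) * (1 / (1 - x)\<^sup>2) = 1 / (1 - x)"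
    using assms by (simp add: power2_eq_square)
  moreover have "(\<lambda>t. (1 - x) * (of_nat (Suc t) * x ^ t))
      = (\<lambda>t. real (Suc t) * (x ^ (Suc t - 1) - x ^ Suc t))"
    by (simp add: fun_eq_iff algebra_simps)
  ultimately have "(\<lambda>t. real (Suc t) * (x ^ (Suc t - 1) - x ^ Suc t)) sums (1 / (1 - x))"
    by metis
  then show ?thesis
    by (subst (asm) sums_Suc_iff) simp
qed

lemma sum_Pow_card:
  assumes "finite S"
  shows "(\<Sum>U\<in>Pow S. \<phi> (card U)) = (\<Sum>i\<le>card S. of_nat (card S choose i) * \<phi> i)"
proof -
  have "(\<Sum>U\<in>Pow S. \<phi> (card U)) = (\<Sum>i\<le>card S. \<Sum>U | U \<in> Pow S \<and> card U = i. \<phi> (card U))"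
    by (rule sum.group[symmetric]) (use assms in \<open>auto intro: card_mono\<close>)
  also have "\<dots> = (\<Sum>i\<le>card S. of_nat (card S choose i) * \<phi> i)"
    using n_subsets[OF assms] by (intro sum.cong refl) simp
  finally show ?thesis .
qed

lemma sum_Pow_alternating_recip:
  assumes "finite R" "card R < n"
  shows "(\<Sum>U\<in>Pow R. (-1) ^ (card R - card U) * (real n / (real n - real (card U))))
       = 1 / real ((n - 1) choose card R)"
proof -
  have "(\<Sum>U\<in>Pow R. (-1) ^ (card R - card U) * (real n / (real n - real (card U))))
      = (\<Sum>i\<le>card R. real (card R choose i) * ((-1) ^ (card R - i) * (real n / (real n - real i))))"
    by (rule sum_Pow_card) (rule assms(1))
  also have "\<dots> = 1 / real ((n - 1) choose card R)"
    using sum_alternating_binomial_recip[OF assms(2)] by (simp add: mult_ac)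
  finally show ?thesis .
qed

lemma expected_draws_eq_sum_not_spanning:
  fixes G :: "'a::field ^ 'n ^ 'k"
  assumes "columns_span G UNIV"
  shows "expected_draws G = (\<Sum>R | \<not> columns_span G R. 1 / real ((CARD('n) - 1) choose card R))"
proof -
  define x where "x U = real (card U) / real CARD('n)" for U :: "'n set"
  have small: "card R < CARD('n)" if "\<not> columns_span G R" for R :: "'n set"
    using that assms by (metis card_seteq finite linorder_not_le subset_UNIV)
  have "(\<lambda>t. real t * (x U ^ (t - 1) - x U ^ t)) sums (real CARD('n) / (real CARD('n) - real (card U)))"
    if "\<not> columns_span G R" "U \<subseteq> R" for R U
  proof -
    have "card U < CARD('n)"
      using small[OF that(1)] card_mono[OF _ that(2)] by simp
    then have "\<bar>x U\<bar> < 1" "1 / (1 - x U) = real CARD('n) / (real CARD('n) - real (card U))"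
      unfolding x_def by (simp_all add: field_simps)
    then show ?thesis
      using sums_of_nat_times_diff_powers[of "x U"] by simp
  qed
  then have "(\<lambda>t. \<Sum>R | \<not> columns_span G R. \<Sum>U\<in>Pow R.
              (-1) ^ (card R - card U) * (real t * (x U ^ (t - 1) - x U ^ t)))
      sums (\<Sum>R | \<not> columns_span G R. \<Sum>U\<in>Pow R.
              (-1) ^ (card R - card U) * (real CARD('n) / (real CARD('n) - real (card U))))"
    by (intro sums_sum sums_mult) auto
  moreover have "real t * stop_prob G t = (\<Sum>R | \<not> columns_span G R. \<Sum>U\<in>Pow R.
              (-1) ^ (card R - card U) * (real t * (x U ^ (t - 1) - x U ^ t)))" for t
    by (cases "t = 0") (simp_all add: stop_prob_eq_sum_not_spanning x_def sum_distrib_left mult_ac)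
  ultimately have "(\<lambda>t. real t * stop_prob G t) sums (\<Sum>R | \<not> columns_span G R. \<Sum>U\<in>Pow R.
              (-1) ^ (card R - card U) * (real CARD('n) / (real CARD('n) - real (card U))))"
    by simp
  then have "expected_draws G = (\<Sum>R | \<not> columns_span G R. \<Sum>U\<in>Pow R.
              (-1) ^ (card R - card U) * (real CARD('n) / (real CARD('n) - real (card U))))"
    unfolding expected_draws_def by (rule sums_unique[symmetric])
  also have "\<dots> = (\<Sum>R | \<not> columns_span G R. 1 / real ((CARD('n) - 1) choose card R))"
    by (intro sum.cong refl sum_Pow_alternating_recip) (auto simp: small)
  finally show ?thesis .
qed

section \<open>Spanning sets of columns and subcodes\<close>

lemma inj_on_lin_comb_independent:
  fixes B :: "('a::field ^ 'n) set"
  assumes "vec.independent B"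
  shows "inj_on (\<lambda>c. \<Sum>v\<in>B. c v *s v) (B \<rightarrow>\<^sub>E UNIV)"
proof (rule inj_onI)
  fix c c' assume c: "c \<in> B \<rightarrow>\<^sub>E UNIV" and c': "c' \<in> B \<rightarrow>\<^sub>E UNIV"
    and "(\<Sum>v\<in>B. c v *s v) = (\<Sum>v\<in>B. c' v *s v)"
  then have "(\<Sum>v\<in>B. (c v - c' v) *s v) = 0"
    by (simp add: vec.scale_left_diff_distrib sum_subtractf)
  moreover have indep: "d v = 0" if "(\<Sum>v\<in>B. d v *s v) = 0" "v \<in> B" for d v
    using assms that vec.independent_explicit by blast
  ultimately have "\<forall>v\<in>B. c v - c' v = 0"
    using indep[of "\<lambda>v. c v - c' v"] by blast
  then show "c = c'"
    using c c' by (intro PiE_ext) auto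
qed

lemma span_eq_lin_comb_image:
  fixes B :: "('a::field ^ 'n) set"
  assumes "finite B"
  shows "vec.span B = (\<lambda>c. \<Sum>v\<in>B. c v *s v) ` (B \<rightarrow>\<^sub>E UNIV)"
proof
  show "vec.span B \<subseteq> (\<lambda>c. \<Sum>v\<in>B. c v *s v) ` (B \<rightarrow>\<^sub>E UNIV)"
  proof
    fix x assume "x \<in> vec.span B"
    then obtain c where x: "x = (\<Sum>v\<in>B. c v *s v)"
      using vec.span_finite[OF assms] by auto
    have "x = (\<Sum>v\<in>B. restrict c B v *s v)"
      unfolding x by (rule sum.cong) auto
    moreover have "restrict c B \<in> B \<rightarrow>\<^sub>E UNIV"
      by simp
    ultimately show "x \<in> (\<lambda>c. \<Sum>v\<in>B. c v *s v) ` (B \<rightarrow>\<^sub>E UNIV)"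
      by (rule image_eqI)
  qed
  show "(\<lambda>c. \<Sum>v\<in>B. c v *s v) ` (B \<rightarrow>\<^sub>E UNIV) \<subseteq> vec.span B"
  proof (rule image_subsetI)
    fix c :: "'a ^ 'n \<Rightarrow> 'a"
    show "(\<Sum>v\<in>B. c v *s v) \<in> vec.span B"
      by (rule vec.span_sum) (simp add: vec.span_base vec.span_scale)
  qed
qed

lemma card_subspace:
  fixes U :: "('a::{finite,field} ^ 'n) set"
  assumes U: "vec.subspace U"
  shows "card U = CARD('a) ^ vec.dim U"
proof -
  obtain B where B: "B \<subseteq> U" "vec.independent B" "U \<subseteq> vec.span B" "card B = vec.dim U"
    using vec.basis_exists[of U] by blast
  have "finite B"
    using B(2) vec.independent_explicit by blast
  have "U = vec.span B"
    using B(1,3) U by (meson antisym vec.span_minimal)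
  also have "\<dots> = (\<lambda>c. \<Sum>v\<in>B. c v *s v) ` (B \<rightarrow>\<^sub>E UNIV)"
    by (rule span_eq_lin_comb_image[OF \<open>finite B\<close>])
  finally have "card U = card (B \<rightarrow>\<^sub>E (UNIV :: 'a set))"
    using card_image[OF inj_on_lin_comb_independent[OF B(2)]] by simp
  then show ?thesis
    using \<open>finite B\<close> B(4) by (simp add: card_PiE)
qed

lemma columns_span_iff_kernel:
  fixes G :: "'a::field ^ 'n ^ 'k"
  shows "columns_span G S \<longleftrightarrow> (\<forall>u. (\<forall>j\<in>S. (u v* G) $ j = 0) \<longrightarrow> u = 0)"
proof -
  define H where "H = (\<chi> i j. if j \<in> S then G $ i $ j else 0)"
  have col: "column j H = (if j \<in> S then column j G else 0)" for j
    by (simp add: H_def column_def vec_eq_iff)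
  then have "columns H \<subseteq> insert 0 ((\<lambda>j. column j G) ` S)"
    and "(\<lambda>j. column j G) ` S \<subseteq> columns H"
    by (auto simp: columns_def)
  then have span: "vec.span (columns H) = vec.span ((\<lambda>j. column j G) ` S)"
    by (metis antisym vec.span_insert_0 vec.span_mono)
  have vH: "u v* H = (\<chi> j. if j \<in> S then (u v* G) $ j else 0)" for u
    by (simp add: H_def vector_matrix_mult_def vec_eq_iff if_distrib cong: if_cong)
  have "columns_span G S \<longleftrightarrow> (\<exists>B. H ** B = mat 1)"
    unfolding columns_span_def matrix_right_invertible_span_columns span ..
  also have "\<dots> \<longleftrightarrow> (\<exists>B. B ** transpose H = mat 1)"
    by (rule left_invertible_transpose[symmetric])
  also have "\<dots> \<longleftrightarrow> (\<forall>x. transpose H *v x = 0 \<longrightarrow> x = 0)"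
    by (rule matrix_left_invertible_ker)
  also have "\<dots> \<longleftrightarrow> (\<forall>u. (\<forall>j\<in>S. (u v* G) $ j = 0) \<longrightarrow> u = 0)"
    by (simp add: vH vec_eq_iff Ball_def)
  finally show ?thesis .
qed

lemma not_columns_span_if_card_less:
  fixes G :: "'a::field ^ 'n ^ 'k"
  assumes "card S < CARD('k)"
  shows "\<not> columns_span G S"
proof
  assume "columns_span G S"
  then have "vec.dim (UNIV :: ('a ^ 'k) set) \<le> card ((\<lambda>j. column j G) ` S)"
    unfolding columns_span_def by (intro vec.dim_le_card) auto
  also have "\<dots> \<le> card S"
    by (rule card_image_le) simp
  finally show False
    using assms vec_dim_card by (metis not_le)
qed

definition vanishing_subcode :: "('a::zero ^ 'n) set \<Rightarrow> 'n set \<Rightarrow> ('a ^ 'n) set" where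
  "vanishing_subcode C S = {c \<in> C. \<forall>j\<in>S. c $ j = 0}"

lemma subspace_vanishing_subcode: "vec.subspace C \<Longrightarrow> vec.subspace (vanishing_subcode C S)"
  unfolding vanishing_subcode_def vec.subspace_def by simp

lemma generator_matrix_eq_0_iff:
  assumes "generator_matrix C G"
  shows "u v* G = 0 \<longleftrightarrow> u = 0"
  using assms unfolding generator_matrix_def by (metis injD vector_matrix_mult_0)

lemma generator_matrix_in_code: "generator_matrix C G \<Longrightarrow> u v* G \<in> C"
  unfolding generator_matrix_def by blast

lemma generator_matrix_columns_span_iff:
  fixes G :: "'a::field ^ 'n ^ 'k"
  assumes G: "generator_matrix C G"
  shows "columns_span G S \<longleftrightarrow> vanishing_subcode C S = {0}"
proof
  assume "columns_span G S"
  then have ker: "u = 0" if "\<forall>j\<in>S. (u v* G) $ j = 0" for u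
    using that by (simp add: columns_span_iff_kernel)
  show "vanishing_subcode C S = {0}"
  proof (intro equalityI subsetI)
    fix c assume "c \<in> vanishing_subcode C S"
    then obtain u where "c = u v* G" "\<forall>j\<in>S. (u v* G) $ j = 0"
      using G unfolding generator_matrix_def vanishing_subcode_def by blast
    then show "c \<in> {0}"
      using ker[of u] by simp
  next
    fix c :: "'a ^ 'n" assume "c \<in> {0}"
    then show "c \<in> vanishing_subcode C S"
      using generator_matrix_in_code[OF G, of 0] by (simp add: vanishing_subcode_def)
  qed
next
  assume vanishing: "vanishing_subcode C S = {0}"
  show "columns_span G S"
    unfolding columns_span_iff_kernel
  proof (intro allI impI)
    fix u assume "\<forall>j\<in>S. (u v* G) $ j = 0"
    then have "u v* G \<in> vanishing_subcode C S"
      using generator_matrix_in_code[OF G] by (simp add: vanishing_subcode_def)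
    then show "u = 0"
      using vanishing generator_matrix_eq_0_iff[OF G] by simp
  qed
qed

lemma generator_matrix_columns_span_UNIV:
  assumes "generator_matrix C G"
  shows "columns_span G UNIV"
  using generator_matrix_eq_0_iff[OF assms] by (simp add: columns_span_iff_kernel vec_eq_iff)

lemma generator_matrix_dim:
  fixes G :: "'a::field ^ 'n ^ 'k"
  assumes G: "generator_matrix C G"
  shows "vec.dim C = CARD('k)"
proof -
  have "(*v) (transpose G) = (\<lambda>u. u v* G)"
    by (rule ext) simp
  then have "Vector_Spaces.linear (*s) (*s) (\<lambda>u. u v* G)"
    using matrix_vector_mul_linear_gen[of "transpose G"] by simp
  moreover have "inj_on (\<lambda>u. u v* G) (vec.span UNIV)"
    using G unfolding generator_matrix_def by simp
  ultimately have "vec.dim ((\<lambda>u. u v* G) ` UNIV) = vec.dim (UNIV :: ('a ^ 'k) set)"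
    by (rule vec.dim_image_eq)
  then show ?thesis
    using G vec_dim_card unfolding generator_matrix_def by simp
qed

lemma min_dist_le_if_vanishing:
  fixes C :: "('a::{finite,zero} ^ 'n) set"
  assumes "c \<in> C" "c \<noteq> 0" "\<forall>j\<in>S. c $ j = 0"
  shows "min_dist C \<le> CARD('n) - card S"
proof -
  have "min_dist C \<le> hweight c"
    unfolding min_dist_def using assms(1,2) by (intro Min_le) auto
  also have "hweight c \<le> card (- S)"
    unfolding hweight_def using assms(3) by (intro card_mono) auto
  also have "card (- S) = CARD('n) - card S"
    by (simp add: Compl_eq_Diff_UNIV card_Diff_subset)
  finally show ?thesis .
qed

lemma min_dist_bounds:
  fixes C :: "('a::{finite,zero} ^ 'n) set"
  assumes "c \<in> C" "c \<noteq> 0"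
  shows "1 \<le> min_dist C" "min_dist C \<le> CARD('n)"
proof -
  have "min_dist C \<in> hweight ` (C - {0})"
    unfolding min_dist_def using assms by (intro Min_in) auto
  then obtain c' :: "'a ^ 'n" where c': "c' \<noteq> 0" "min_dist C = hweight c'"
    by blast
  then obtain j where "c' $ j \<noteq> 0"
    by (auto simp: vec_eq_iff)
  then show "1 \<le> min_dist C"
    using c' unfolding hweight_def by (auto simp: Suc_le_eq card_gt_0_iff)
  show "min_dist C \<le> CARD('n)"
    using c' unfolding hweight_def by (simp add: card_mono)
qed

lemma generator_matrix_min_dist_bounds:
  fixes G :: "'a::{finite,field} ^ 'n ^ 'k"
  assumes G: "generator_matrix C G"
  shows "1 \<le> min_dist C" "min_dist C \<le> CARD('n)"
proof -
  define u :: "'a ^ 'k" where "u = (\<chi> i. 1)"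
  have "u \<noteq> 0"
    by (simp add: u_def vec_eq_iff)
  then have "u v* G \<in> C" "u v* G \<noteq> 0"
    using generator_matrix_in_code[OF G] generator_matrix_eq_0_iff[OF G] by auto
  then show "1 \<le> min_dist C" "min_dist C \<le> CARD('n)"
    by (rule min_dist_bounds)+
qed

lemma card_le_if_not_columns_span:
  fixes G :: "'a::{finite,field} ^ 'n ^ 'k"
  assumes G: "generator_matrix C G" and S: "\<not> columns_span G S"
  shows "card S \<le> CARD('n) - min_dist C"
proof -
  have "0 \<in> vanishing_subcode C S"
    using generator_matrix_in_code[OF G, of 0] by (simp add: vanishing_subcode_def)
  then obtain c where "c \<in> vanishing_subcode C S" "c \<noteq> 0"
    using S generator_matrix_columns_span_iff[OF G] by blast
  then have "min_dist C \<le> CARD('n) - card S"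
    by (intro min_dist_le_if_vanishing) (auto simp: vanishing_subcode_def)
  moreover have "card S \<le> CARD('n)"
    by (simp add: card_mono)
  moreover have "1 \<le> min_dist C"
    by (rule generator_matrix_min_dist_bounds[OF G])
  ultimately show ?thesis
    by linarith
qed

section \<open>Extension codes\<close>

lemma ext_code_eq_image:
  "ext_code C m = (\<lambda>Y i. if i < m then Y i else 0) ` ({..<m} \<rightarrow>\<^sub>E C)"
proof (intro equalityI subsetI)
  fix X assume "X \<in> ext_code C m"
  then have X: "\<forall>i<m. X i \<in> C" "\<forall>i\<ge>m. X i = 0"
    by (simp_all add: ext_code_def)
  have "X = (\<lambda>i. if i < m then restrict X {..<m} i else 0)"
  proof
    fix i
    show "X i = (if i < m then restrict X {..<m} i else 0)"
      using X(2) by (cases "i < m") auto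
  qed
  moreover have "restrict X {..<m} \<in> {..<m} \<rightarrow>\<^sub>E C"
    using X(1) by simp
  ultimately show "X \<in> (\<lambda>Y i. if i < m then Y i else 0) ` ({..<m} \<rightarrow>\<^sub>E C)"
    by (rule image_eqI[where f = "\<lambda>Y i. if i < m then Y i else 0" and x = "restrict X {..<m}"])
next
  fix X assume "X \<in> (\<lambda>Y i. if i < m then Y i else 0) ` ({..<m} \<rightarrow>\<^sub>E C)"
  then obtain Y where "Y \<in> {..<m} \<rightarrow>\<^sub>E C" "X = (\<lambda>i. if i < m then Y i else 0)"
    by blast
  then show "X \<in> ext_code C m"
    unfolding ext_code_def by (simp add: PiE_iff)
qed

lemma card_ext_code:
  assumes "finite C"
  shows "card (ext_code C m) = card C ^ m"
proof -
  have "inj_on (\<lambda>Y i. if i < m then Y i else 0) ({..<m} \<rightarrow>\<^sub>E C)"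
  proof (rule inj_onI)
    fix Y Y' assume Y: "Y \<in> {..<m} \<rightarrow>\<^sub>E C" "Y' \<in> {..<m} \<rightarrow>\<^sub>E C"
      and eq: "(\<lambda>i. if i < m then Y i else 0) = (\<lambda>i. if i < m then Y' i else 0)"
    show "Y = Y'"
    proof (rule PiE_ext[OF Y])
      fix i assume "i \<in> {..<m}"
      then show "Y i = Y' i"
        using fun_cong[OF eq, of i] by simp
    qed
  qed
  then show ?thesis
    using assms by (simp add: ext_code_eq_image card_image card_PiE)
qed

lemma finite_ext_code: "finite C \<Longrightarrow> finite (ext_code C m)"
  by (simp add: ext_code_eq_image finite_PiE)

lemma ext_code_vanishing_subcode:
  "ext_code (vanishing_subcode C S) m = {X \<in> ext_code C m. \<forall>i. \<forall>j\<in>S. X i $ j = 0}"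
  by (auto simp: ext_code_def vanishing_subcode_def) (metis not_le zero_index)

lemma sum_card_ext_code_vanishing_subcode:
  fixes C :: "('a::{finite,zero} ^ 'n) set"
  shows "(\<Sum>S | card S = r. real (card (ext_code (vanishing_subcode C S) m)))
       = (\<Sum>l=0..CARD('n). real (W_ext C m l) * real ((CARD('n) - l) choose r))"
proof -
  let ?E = "ext_code C m"
  define supp where "supp X = {j. \<exists>i. X i $ j \<noteq> 0}" for X :: "nat \<Rightarrow> 'a ^ 'n"
  have fin: "finite ?E"
    by (simp add: finite_ext_code)
  have "(\<Sum>S | card S = r. real (card (ext_code (vanishing_subcode C S) m)))
      = (\<Sum>S | card S = r. \<Sum>X\<in>?E. of_bool (S \<subseteq> - supp X))"
    unfolding ext_code_vanishing_subcode supp_def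
    by (intro sum.cong refl) (auto simp: fin Int_def intro!: arg_cong[where f = card])
  also have "\<dots> = (\<Sum>X\<in>?E. \<Sum>S | card S = r. of_bool (S \<subseteq> - supp X))"
    by (rule sum.swap)
  also have "\<dots> = (\<Sum>X\<in>?E. real ((CARD('n) - ext_weight X) choose r))"
  proof (intro sum.cong refl)
    fix X
    have "card (- supp X) = CARD('n) - ext_weight X"
      unfolding ext_weight_def supp_def[symmetric] by (simp add: Compl_eq_Diff_UNIV card_Diff_subset)
    then show "(\<Sum>S | card S = r. of_bool (S \<subseteq> - supp X)) = real ((CARD('n) - ext_weight X) choose r)"
      using n_subsets[of "- supp X" r] by (simp add: Int_def conj_commute)
  qed
  also have "\<dots> = (\<Sum>l=0..CARD('n). \<Sum>X | X \<in> ?E \<and> ext_weight X = l. real ((CARD('n) - ext_weight X) choose r))"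
    by (rule sum.group[symmetric]) (auto simp: fin ext_weight_def card_mono)
  also have "\<dots> = (\<Sum>l=0..CARD('n). real (W_ext C m l) * real ((CARD('n) - l) choose r))"
    by (simp add: W_ext_def)
  finally show ?thesis .
qed

text \<open>The subcode vanishing on \<open>S\<close> has \<open>q^u\<close> elements, \<open>u\<close> its dimension, and \<open>S\<close>
  spans iff \<open>u = 0\<close>.\<close>

lemma of_bool_columns_span_eq_gamma_sum:
  fixes C :: "('a::{finite,field} ^ 'n) set" and G :: "'a ^ 'n ^ 'k"
  assumes G: "generator_matrix C G" and C: "vec.subspace C"
  shows "of_bool (columns_span G S) = (\<Sum>m=0..CARD('n).
    (-1) ^ m * gamma_coeff (real CARD('a)) m CARD('n) * real (card (ext_code (vanishing_subcode C S) m)))"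
proof -
  define u where "u = vec.dim (vanishing_subcode C S)"
  have "real CARD('a) > 1"
    using card_mono[of UNIV "{0::'a, 1}"] by simp
  moreover have "vec.subspace (vanishing_subcode C S)"
    using C by (rule subspace_vanishing_subcode)
  then have "real (card (ext_code (vanishing_subcode C S) m)) = (real CARD('a) ^ u) ^ m" for m
    unfolding u_def by (simp add: card_ext_code card_subspace)
  moreover have "u \<le> CARD('n)"
    unfolding u_def by (rule dim_subset_UNIV_cart_gen)
  moreover have "columns_span G S \<longleftrightarrow> u = 0"
    unfolding generator_matrix_columns_span_iff[OF G] u_def vec.dim_eq_0
    using generator_matrix_in_code[OF G, of 0] by (auto simp: vanishing_subcode_def)
  ultimately show ?thesis
    using gamma_coeff_alternating_sum by simp
qed

lemma card_spanning_subsets: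
  fixes C :: "('a::{finite,field} ^ 'n) set" and G :: "'a ^ 'n ^ 'k"
  assumes G: "generator_matrix C G" and C: "vec.subspace C"
  shows "real (card {S. card S = r \<and> columns_span G S}) =
    (\<Sum>l=0..CARD('n) - r. real ((CARD('n) - l) choose r) *
       (\<Sum>m=0..CARD('n). (-1) ^ m * real (W_ext C m l) * gamma_coeff (real CARD('a)) m CARD('n)))"
proof -
  define n where "n = CARD('n)"
  define \<gamma> where "\<gamma> m = gamma_coeff (real CARD('a)) m n" for m
  have "real (card {S. card S = r \<and> columns_span G S}) = (\<Sum>S | card S = r. of_bool (columns_span G S))"
    by (simp add: Int_def conj_commute)
  also have "\<dots> = (\<Sum>m=0..n. (-1) ^ m * \<gamma> m *
      (\<Sum>S | card S = r. real (card (ext_code (vanishing_subcode C S) m))))"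
    unfolding of_bool_columns_span_eq_gamma_sum[OF G C] sum_distrib_left n_def \<gamma>_def by (rule sum.swap)
  also have "\<dots> = (\<Sum>l=0..n. real ((n - l) choose r) * (\<Sum>m=0..n. (-1) ^ m * real (W_ext C m l) * \<gamma> m))"
    unfolding n_def sum_card_ext_code_vanishing_subcode sum_distrib_left
    by (subst sum.swap) (simp add: mult_ac)
  also have "\<dots> = (\<Sum>l=0..n - r. real ((n - l) choose r) * (\<Sum>m=0..n. (-1) ^ m * real (W_ext C m l) * \<gamma> m))"
    by (rule sum.mono_neutral_right) auto
  finally show ?thesis
    unfolding n_def \<gamma>_def .
qed

lemma expected_draws_eq_sum_card_spanning:
  fixes G :: "'a::{finite,field} ^ 'n ^ 'k"
  assumes G: "generator_matrix C G"
  shows "expected_draws G = (\<Sum>r\<le>CARD('n) - min_dist C.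
     (real (CARD('n) choose r) - real (card {S :: 'n set. card S = r \<and> columns_span G S}))
       / real ((CARD('n) - 1) choose r))"
proof -
  let ?N = "\<lambda>r. {S :: 'n set. card S = r \<and> \<not> columns_span G S}"
  have "expected_draws G = (\<Sum>R | \<not> columns_span G R. 1 / real ((CARD('n) - 1) choose card R))"
    by (rule expected_draws_eq_sum_not_spanning[OF generator_matrix_columns_span_UNIV[OF G]])
  also have "\<dots> = (\<Sum>r\<le>CARD('n) - min_dist C.
      \<Sum>R\<in>{R \<in> {R. \<not> columns_span G R}. card R = r}. 1 / real ((CARD('n) - 1) choose card R))"
    by (rule sum.group[symmetric]) (auto intro: card_le_if_not_columns_span[OF G])
  also have "\<dots> = (\<Sum>r\<le>CARD('n) - min_dist C. real (card (?N r)) / real ((CARD('n) - 1) choose r))"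
  proof (intro sum.cong refl)
    fix r
    have "(\<Sum>R\<in>?N r. 1 / real ((CARD('n) - 1) choose card R)) = (\<Sum>R\<in>?N r. 1 / real ((CARD('n) - 1) choose r))"
      by (rule sum.cong) auto
    then show "(\<Sum>R\<in>{R \<in> {R. \<not> columns_span G R}. card R = r}. 1 / real ((CARD('n) - 1) choose card R))
        = real (card (?N r)) / real ((CARD('n) - 1) choose r)"
      by (simp add: conj_commute)
  qed
  also have "\<dots> = (\<Sum>r\<le>CARD('n) - min_dist C.
     (real (CARD('n) choose r) - real (card {S :: 'n set. card S = r \<and> columns_span G S}))
       / real ((CARD('n) - 1) choose r))"
  proof (intro sum.cong refl)
    fix r
    have "{S :: 'n set. card S = r} = {S. card S = r \<and> columns_span G S} \<union> ?N r"
      by auto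
    then have "CARD('n) choose r = card {S :: 'n set. card S = r \<and> columns_span G S} + card (?N r)"
      using n_subsets[of "UNIV :: 'n set" r] by (simp add: card_Un_disjoint disjoint_iff)
    then show "real (card (?N r)) / real ((CARD('n) - 1) choose r) = (real (CARD('n) choose r)
        - real (card {S :: 'n set. card S = r \<and> columns_span G S})) / real ((CARD('n) - 1) choose r)"
      by simp
  qed
  finally show ?thesis .
qed

lemma sum_binomial_ratio_eq_harm:
  assumes d: "1 \<le> d" "d \<le> n"
  shows "(\<Sum>r\<le>n - d. real (n choose r) / real ((n - 1) choose r)) = real n * (harm n - harm (d - 1))"
proof -
  have ratio: "real (n choose r) / real ((n - 1) choose r) = real n * inverse (real (n - r))" if "r < n" for r
  proof -
    have "real (n - r) * real (n choose r) = real n * real ((n - 1) choose r)"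
      by (simp only: binomial_absorb_comp flip: of_nat_mult)
    then show ?thesis
      using that by (simp add: field_simps)
  qed
  have "{1..n} = {1..d - 1} \<union> {d..n}"
    using d by auto
  then have harm_diff: "harm n - harm (d - 1) = (\<Sum>i=d..n. inverse (real i))"
    unfolding harm_def using d by (simp add: sum.union_disjoint)
  have "(\<Sum>r\<le>n - d. real (n choose r) / real ((n - 1) choose r)) = real n * (\<Sum>r\<le>n - d. inverse (real (n - r)))"
    unfolding sum_distrib_left by (intro sum.cong refl ratio) (use d in auto)
  also have "(\<Sum>r\<le>n - d. inverse (real (n - r))) = (\<Sum>i=d..n. inverse (real i))"
    by (rule sum.reindex_bij_witness[where i = "\<lambda>i. n - i" and j = "\<lambda>r. n - r"]) (use d in auto)
  finally show ?thesis
    unfolding harm_diff .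
qed

theorem mainTheorem12:
  fixes C :: "('a::{finite,field} ^ 'n) set"
    and G :: "'a ^ 'n ^ 'k"
    and q n k d :: nat
  assumes "q = CARD('a)"
    and "n = CARD('n)"
    and "vec.subspace C"
    and "vec.dim C = k"
    and "2 \<le> k" and "k \<le> n"
    and "d = min_dist C"
    and "generator_matrix C G"
  shows "expected_draws G =
      real n * (harm n - harm (d - 1))
      - (\<Sum>r=k..n-d. (1 / real ((n - 1) choose r)) *
           (\<Sum>l=0..n-r. real ((n - l) choose r) *
              (\<Sum>m=0..n. (-1) ^ m * real (W_ext C m l) * gamma_coeff (real q) m n)))"
proof -
  note q = assms(1) and n = assms(2) and C = assms(3) and d = assms(7) and G = assms(8)
  define P where "P r = real (card {S :: 'n set. card S = r \<and> columns_span G S})" for r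
  have k: "k = CARD('k)"
    using generator_matrix_dim[OF G] assms(4) by simp
  have d_bounds: "1 \<le> d" "d \<le> n"
    using generator_matrix_min_dist_bounds[OF G] d n by auto
  have "expected_draws G = (\<Sum>r\<le>n - d. real (n choose r) / real ((n - 1) choose r))
      - (\<Sum>r\<le>n - d. P r / real ((n - 1) choose r))"
    unfolding expected_draws_eq_sum_card_spanning[OF G] P_def n d
    by (simp add: diff_divide_distrib sum_subtractf)
  also have "(\<Sum>r\<le>n - d. real (n choose r) / real ((n - 1) choose r)) = real n * (harm n - harm (d - 1))"
    by (rule sum_binomial_ratio_eq_harm[OF d_bounds])
  also have "(\<Sum>r\<le>n - d. P r / real ((n - 1) choose r)) = (\<Sum>r=k..n - d. P r / real ((n - 1) choose r))"
    using not_columns_span_if_card_less[of _ G] k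
    by (intro sum.mono_neutral_right) (auto simp: P_def)
  also have "\<dots> = (\<Sum>r=k..n-d. (1 / real ((n - 1) choose r)) *
           (\<Sum>l=0..n-r. real ((n - l) choose r) *
              (\<Sum>m=0..n. (-1) ^ m * real (W_ext C m l) * gamma_coeff (real q) m n)))"
    unfolding P_def card_spanning_subsets[OF G C] q n by simp
  finally show ?thesis .
qed

end
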